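(* Let $T$ be a rooted binary tree in which every internal node has exactly two children, with $n\ge1$ leaves. Let $E$ be the set of all seed letters of $T$ (subsets of nodes containing all leaves and closed under taking descendants), and let $\mathcal{I}\subseteq 2^E$ be the family of hierarchical seed alphabets, i.e. subsets $X\subseteq E$ totally ordered by inclusion. Then $\mathcal{I}$ is a constrained independence system, namely: (i) $\emptyset\in\mathcal{I}$; (ii) if $X\in\mathcal{I}$ and $Y\subseteq X$ then $Y\in\mathcal{I}$; (iii) if $X,Y\in\mathcal{I}$ with $|Y|<|X|$, then there exists $e\in E\setminus Y$ with $Y\cup\{e\}\in\mathcal{I}$; (iv) every inclusion-minimal set in $2^E\setminus\mathcal{I}$ has cardinality exactly two. *)

theory Defs
  imports Main "HOL-Library.Sublist"
begin

text \<open>A tree has at least one leaf automatically. Nodes are addressed by their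
  path from the root (False = left child, True = right child).\<close>
datatype btree = Leaf | Node btree btree

fun nodes :: "btree \<Rightarrow> bool list set" where
  "nodes Leaf = {[]}"
| "nodes (Node l r) = insert [] (Cons False ` nodes l \<union> Cons True ` nodes r)"

fun leaves :: "btree \<Rightarrow> bool list set" where
  "leaves Leaf = {[]}"
| "leaves (Node l r) = Cons False ` leaves l \<union> Cons True ` leaves r"

text \<open>w is a descendant of v (reflexively) iff the path of v is a prefix of the path of w.\<close>
definition seed_letter :: "btree \<Rightarrow> bool list set \<Rightarrow> bool" where
  "seed_letter T S \<longleftrightarrow> S \<subseteq> nodes T \<and> leaves T \<subseteq> S \<and>
     (\<forall>v\<in>S. \<forall>w\<in>nodes T. prefix v w \<longrightarrow> w \<in> S)"

definition seed_letters :: "btree \<Rightarrow> bool list set set" where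
  "seed_letters T = {S. seed_letter T S}"

definition hierarchical :: "btree \<Rightarrow> bool list set set \<Rightarrow> bool" where
  "hierarchical T X \<longleftrightarrow> X \<subseteq> seed_letters T \<and> (\<forall>A\<in>X. \<forall>B\<in>X. A \<subseteq> B \<or> B \<subseteq> A)"

definition hier_alphabets :: "btree \<Rightarrow> bool list set set set" where
  "hier_alphabets T = {X. hierarchical T X}"

end

theory Submission
  imports Defs
begin

(* Every seed letter S of T lies between the set L of leaves and the
   set N of all nodes, and seed letters can be refined one node at a time: if
   S is strictly contained in S', adding a node of S' - S of maximal depth to S
   gives again a seed letter.  Hence between two nested seed letters A and B
   there is a seed letter of every cardinality from card A to card B.
   Hierarchical alphabets are chains of finite sets, so their members are
   ordered by cardinality and distinct members have distinct cardinalities;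
   in particular an alphabet has at most card N - card L + 1 letters.
   For the exchange axiom (iii): if card Y < card X, some cardinality k in
   [card L, card N] is not attained in Y; squeezing between the largest letter
   of size at most k and the smallest letter of size at least k in Y \<union> {L, N}
   yields a new seed letter of cardinality k comparable with all of Y.  Axioms (i), (ii)
   and (iv) are immediate: a set of seed letters fails to be hierarchical
   exactly when it contains two incomparable letters. *)

lemma finite_nodes: "finite (nodes T)"
  by (induction T) auto

lemma leaves_subset_nodes: "leaves T \<subseteq> nodes T"
  by (induction T) auto

lemma leaf_prefix_eq: "v \<in> leaves T \<Longrightarrow> w \<in> nodes T \<Longrightarrow> prefix v w \<Longrightarrow> w = v"
  by (induction T arbitrary: v w) (auto simp: Cons_prefix_Cons)

lemma seed_letter_bounds: "seed_letter T S \<Longrightarrow> leaves T \<subseteq> S \<and> S \<subseteq> nodes T"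
  unfolding seed_letter_def by auto

lemma seed_letter_finite: "seed_letter T S \<Longrightarrow> finite S"
  by (meson seed_letter_bounds finite_nodes finite_subset)

lemma finite_seed_letters: "finite (seed_letters T)"
proof -
  have "seed_letters T \<subseteq> Pow (nodes T)"
    unfolding seed_letters_def seed_letter_def by auto
  then show ?thesis using finite_nodes by (simp add: finite_subset)
qed

lemma seed_letter_leaves: "seed_letter T (leaves T)"
  unfolding seed_letter_def using leaves_subset_nodes leaf_prefix_eq by blast

lemma seed_letter_nodes: "seed_letter T (nodes T)"
  unfolding seed_letter_def using leaves_subset_nodes by blast

text \<open>One-node refinement: a deepest node of \<open>S' - S\<close> has all its proper
  descendants in \<open>S\<close>, so it can be added to \<open>S\<close>.\<close>
lemma seed_letter_step:
  assumes S: "seed_letter T S" and S': "seed_letter T S'" and sub: "S \<subset> S'"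
  shows "\<exists>v\<in>S' - S. seed_letter T (insert v S)"
proof -
  have fin: "finite (length ` (S' - S))" using seed_letter_finite[OF S'] by simp
  have "length ` (S' - S) \<noteq> {}" using sub by auto
  then have "Max (length ` (S' - S)) \<in> length ` (S' - S)" using Max_in[OF fin] by blast
  then obtain v where v: "v \<in> S' - S" "length v = Max (length ` (S' - S))"
    by (metis imageE)
  have deepest: "length w \<le> length v" if "w \<in> S' - S" for w
    using v(2) Max_ge[OF fin] that by simp
  have closed: "\<forall>u\<in>insert v S. \<forall>w\<in>nodes T. prefix u w \<longrightarrow> w \<in> insert v S"
  proof (intro ballI impI)
    fix u w assume u: "u \<in> insert v S" and w: "w \<in> nodes T" and uw: "prefix u w"
    show "w \<in> insert v S"
    proof (cases "u = v")
      case False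
      then show ?thesis using S u w uw unfolding seed_letter_def by auto
    next
      case True
      show ?thesis
      proof (rule ccontr)
        assume "w \<notin> insert v S"
        moreover have "w \<in> S'" using S' v(1) w uw True unfolding seed_letter_def by auto
        ultimately have "w \<in> S' - S" "w \<noteq> v" by auto
        moreover have "length v < length w"
          using uw True \<open>w \<noteq> v\<close> by (simp add: prefix_length_less strict_prefix_def)
        ultimately show False using deepest by fastforce
      qed
    qed
  qed
  moreover have "insert v S \<subseteq> nodes T" "leaves T \<subseteq> insert v S"
    using S S' v(1) unfolding seed_letter_def by auto
  ultimately have "seed_letter T (insert v S)" unfolding seed_letter_def by blast
  then show ?thesis using v(1) by blast
qed

lemma seed_letter_interpolate:
  assumes A: "seed_letter T A" and B: "seed_letter T B" and "A \<subseteq> B"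
    and "card A \<le> k" "k \<le> card B"
  shows "\<exists>S. seed_letter T S \<and> A \<subseteq> S \<and> S \<subseteq> B \<and> card S = k"
  using \<open>card A \<le> k\<close> \<open>k \<le> card B\<close>
proof (induction k rule: dec_induct)
  case base
  then show ?case using A \<open>A \<subseteq> B\<close> by blast
next
  case (step n)
  then obtain S where S: "seed_letter T S" "A \<subseteq> S" "S \<subseteq> B" "card S = n"
    by auto
  then have "S \<subset> B" using \<open>Suc n \<le> card B\<close> by auto
  then obtain v where v: "v \<in> B - S" "seed_letter T (insert v S)"
    using seed_letter_step[OF S(1) B] by blast
  have "card (insert v S) = Suc n"
    using v(1) S(4) seed_letter_finite[OF S(1)] by simp
  then show ?case using v S by blast
qed

lemma chain_subset_iff_card_le:
  assumes "finite C" "finite D" "C \<subseteq> D \<or> D \<subseteq> C"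
  shows "C \<subseteq> D \<longleftrightarrow> card C \<le> card D"
proof
  show "card C \<le> card D" if "C \<subseteq> D" using that assms(2) by (rule card_mono[rotated])
  show "C \<subseteq> D" if "card C \<le> card D"
    using that assms card_seteq[of C D] by auto
qed

lemma chain_inj_on_card:
  assumes "\<forall>C\<in>X. finite C" "\<forall>C\<in>X. \<forall>D\<in>X. C \<subseteq> D \<or> D \<subseteq> C"
  shows "inj_on card X"
  by (rule inj_onI) (metis assms card_subset_eq)

lemma hierarchical_finite: "hierarchical T X \<Longrightarrow> finite X"
  unfolding hierarchical_def by (meson finite_seed_letters finite_subset)

lemma hierarchical_subset: "hierarchical T X \<Longrightarrow> Y \<subseteq> X \<Longrightarrow> hierarchical T Y"
  unfolding hierarchical_def by blast

lemma hierarchical_insert: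
  assumes "hierarchical T Y" "seed_letter T S" "\<forall>C\<in>Y. C \<subseteq> S \<or> S \<subseteq> C"
  shows "hierarchical T (insert S Y)"
  using assms unfolding hierarchical_def seed_letters_def by blast

lemma hierarchical_insert_extremes:
  assumes "hierarchical T Y"
  shows "hierarchical T (insert (leaves T) (insert (nodes T) Y))"
proof -
  have bounds: "leaves T \<subseteq> C \<and> C \<subseteq> nodes T" if "C \<in> insert (nodes T) Y" for C
  proof (cases "C = nodes T")
    case False
    then have "seed_letter T C" using that assms unfolding hierarchical_def seed_letters_def by auto
    then show ?thesis by (rule seed_letter_bounds)
  qed (simp add: leaves_subset_nodes)
  have "hierarchical T (insert (nodes T) Y)"
    by (rule hierarchical_insert[OF assms seed_letter_nodes]) (simp add: bounds)
  then show ?thesis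
    by (rule hierarchical_insert[OF _ seed_letter_leaves]) (simp add: bounds)
qed

lemma hierarchical_card_image:
  assumes "hierarchical T X"
  shows "inj_on card X" "card ` X \<subseteq> {card (leaves T)..card (nodes T)}"
proof -
  have letters: "\<forall>C\<in>X. seed_letter T C"
    using assms unfolding hierarchical_def seed_letters_def by blast
  show "inj_on card X"
  proof (rule chain_inj_on_card)
    show "\<forall>C\<in>X. finite C" using letters seed_letter_finite by blast
    show "\<forall>C\<in>X. \<forall>D\<in>X. C \<subseteq> D \<or> D \<subseteq> C" using assms unfolding hierarchical_def by blast
  qed
  show "card ` X \<subseteq> {card (leaves T)..card (nodes T)}"
  proof
    fix k assume "k \<in> card ` X"
    then obtain C where "C \<in> X" "k = card C" by blast
    then have "seed_letter T C" using letters by blast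
    then have "leaves T \<subseteq> C" "C \<subseteq> nodes T" "finite C"
      using seed_letter_bounds seed_letter_finite by auto
    then show "k \<in> {card (leaves T)..card (nodes T)}"
      using \<open>k = card C\<close> finite_nodes by (simp add: card_mono)
  qed
qed

lemma hierarchical_missing_card:
  assumes X: "hierarchical T X" and Y: "hierarchical T Y" and less: "card Y < card X"
  shows "\<exists>k\<in>{card (leaves T)..card (nodes T)}. k \<notin> card ` Y"
proof (rule ccontr)
  let ?R = "{card (leaves T)..card (nodes T)}"
  assume "\<not> ?thesis"
  then have "?R \<subseteq> card ` Y" by auto
  then have "card ?R \<le> card (card ` Y)"
    using hierarchical_finite[OF Y] by (meson card_mono finite_imageI)
  also have "\<dots> \<le> card Y" using hierarchical_finite[OF Y] by (rule card_image_le)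
  also have "\<dots> < card X" by (rule less)
  also have "\<dots> = card (card ` X)"
    using hierarchical_card_image(1)[OF X] by (simp add: card_image)
  also have "\<dots> \<le> card ?R"
    using hierarchical_card_image(2)[OF X] by (meson card_mono finite_atLeastAtMost)
  finally show False by simp
qed

text \<open>It is squeezed between the largest
  letter of size at most \<open>k\<close> and the smallest letter of size at least \<open>k\<close> in the
  chain \<open>Y\<close> extended by the extreme letters.\<close>
lemma hierarchical_fill_gap:
  assumes Y: "hierarchical T Y"
    and k: "k \<in> {card (leaves T)..card (nodes T)}" "k \<notin> card ` Y"
  shows "\<exists>S. seed_letter T S \<and> card S = k \<and> (\<forall>C\<in>Y. C \<subseteq> S \<or> S \<subseteq> C)"
proof -
  define Z where "Z = insert (leaves T) (insert (nodes T) Y)"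
  have Z: "hierarchical T Z" unfolding Z_def using hierarchical_insert_extremes[OF Y] .
  have Z_letter: "\<And>C. C \<in> Z \<Longrightarrow> seed_letter T C"
    using Z unfolding hierarchical_def seed_letters_def by blast
  have Z_order: "\<And>C D. C \<in> Z \<Longrightarrow> D \<in> Z \<Longrightarrow> C \<subseteq> D \<longleftrightarrow> card C \<le> card D"
    using Z Z_letter seed_letter_finite chain_subset_iff_card_le
    unfolding hierarchical_def by meson
  define Lo where "Lo = {C\<in>Z. card C \<le> k}"
  define Hi where "Hi = {C\<in>Z. k \<le> card C}"
  have fin: "finite (card ` Lo)" "finite (card ` Hi)"
    using hierarchical_finite[OF Z] unfolding Lo_def Hi_def by auto
  have "leaves T \<in> Lo" "nodes T \<in> Hi" using k(1) unfolding Lo_def Hi_def Z_def by auto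
  then have "Max (card ` Lo) \<in> card ` Lo" "Min (card ` Hi) \<in> card ` Hi"
    using Max_in[OF fin(1)] Min_in[OF fin(2)] by blast+
  then obtain A B where A: "A \<in> Lo" "card A = Max (card ` Lo)"
    and B: "B \<in> Hi" "card B = Min (card ` Hi)"
    by (metis imageE)
  have below_A: "C \<subseteq> A" if "C \<in> Lo" for C
    using that A Max_ge[OF fin(1)] Z_order unfolding Lo_def by simp
  have above_B: "B \<subseteq> C" if "C \<in> Hi" for C
    using that B Min_le[OF fin(2)] Z_order unfolding Hi_def by simp
  have "A \<subseteq> B" "card A \<le> k" "k \<le> card B"
    using A(1) B(1) Z_order le_trans unfolding Lo_def Hi_def by auto
  then obtain S where S: "seed_letter T S" "A \<subseteq> S" "S \<subseteq> B" "card S = k"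
    using seed_letter_interpolate Z_letter A(1) B(1) unfolding Lo_def Hi_def by blast
  have "C \<subseteq> S \<or> S \<subseteq> C" if "C \<in> Y" for C
  proof -
    have "C \<in> Lo \<or> C \<in> Hi" using that unfolding Lo_def Hi_def Z_def by auto
    then show ?thesis using below_A above_B S by blast
  qed
  then show ?thesis using S by blast
qed

lemma hierarchical_exchange:
  assumes X: "hierarchical T X" and Y: "hierarchical T Y" and less: "card Y < card X"
  shows "\<exists>e \<in> seed_letters T - Y. hierarchical T (Y \<union> {e})"
proof -
  obtain k where k: "k \<in> {card (leaves T)..card (nodes T)}" "k \<notin> card ` Y"
    using hierarchical_missing_card[OF X Y less] by blast
  then obtain S where S: "seed_letter T S" "card S = k" "\<forall>C\<in>Y. C \<subseteq> S \<or> S \<subseteq> C"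
    using hierarchical_fill_gap[OF Y] by blast
  have "S \<notin> Y" using S(2) k(2) by blast
  moreover have "hierarchical T (insert S Y)" using hierarchical_insert[OF Y S(1) S(3)] .
  ultimately show ?thesis using S(1) unfolding seed_letters_def by auto
qed

lemma minimal_non_hierarchical_card:
  assumes "X \<subseteq> seed_letters T" "\<not> hierarchical T X"
    and minimal: "\<forall>Y. Y \<subset> X \<longrightarrow> hierarchical T Y"
  shows "card X = 2"
proof -
  obtain A B where AB: "A \<in> X" "B \<in> X" "\<not> A \<subseteq> B" "\<not> B \<subseteq> A"
    using assms(1,2) unfolding hierarchical_def by auto
  then have "\<not> hierarchical T {A, B}" unfolding hierarchical_def by auto
  then have "\<not> {A, B} \<subset> X" using minimal by blast
  then have "X = {A, B}" using AB by auto
  moreover have "A \<noteq> B" using AB by auto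
  ultimately show ?thesis by simp
qed

theorem mainTheorem3:
  fixes T :: btree
  defines "E \<equiv> seed_letters T" and "\<I> \<equiv> hier_alphabets T"
  shows "{} \<in> \<I>
    \<and> (\<forall>X Y. X \<in> \<I> \<and> Y \<subseteq> X \<longrightarrow> Y \<in> \<I>)
    \<and> (\<forall>X Y. X \<in> \<I> \<and> Y \<in> \<I> \<and> card Y < card X \<longrightarrow> (\<exists>e \<in> E - Y. Y \<union> {e} \<in> \<I>))
    \<and> (\<forall>X. X \<subseteq> E \<and> X \<notin> \<I> \<and> (\<forall>Y. Y \<subset> X \<longrightarrow> Y \<in> \<I>) \<longrightarrow> card X = 2)"
proof (intro conjI allI impI)
  show "{} \<in> \<I>" unfolding \<I>_def hier_alphabets_def hierarchical_def by simp
next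
  fix X Y assume "X \<in> \<I> \<and> Y \<subseteq> X"
  then show "Y \<in> \<I>"
    using hierarchical_subset[of T X Y] unfolding \<I>_def hier_alphabets_def by simp
next
  fix X Y assume "X \<in> \<I> \<and> Y \<in> \<I> \<and> card Y < card X"
  then show "\<exists>e \<in> E - Y. Y \<union> {e} \<in> \<I>"
    using hierarchical_exchange[of T X Y] unfolding E_def \<I>_def hier_alphabets_def by simp
next
  fix X assume "X \<subseteq> E \<and> X \<notin> \<I> \<and> (\<forall>Y. Y \<subset> X \<longrightarrow> Y \<in> \<I>)"
  then show "card X = 2"
    using minimal_non_hierarchical_card[of X T] unfolding E_def \<I>_def hier_alphabets_def by simp
qed

end
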